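(* Let $\nu$ be a positive continuous radial function on $\mathbb{D}$, and let $X$ be a Banach space of analytic functions on $\mathbb{D}$ in which the set of polynomials is dense. Let $\varphi, \psi$ be analytic self-maps of $\mathbb{D}$ such that $C_{\varphi} - C_{\psi} : X \to \mathcal{B}_{\nu}$ is bounded. Then the following are equivalent: (a) $C_{\varphi} - C_{\psi}$ is a bounded operator from $X$ into $\mathcal{B}_{\nu,0}$; (b) $\varphi - \psi \in \mathcal{B}_{\nu,0}$ and $\varphi^{2} - \psi^{2} \in \mathcal{B}_{\nu,0}$; (c) $\varphi - \psi \in \mathcal{B}_{\nu,0}$ and $\displaystyle\lim_{|z|\to 1^{-}} \nu(z)|\varphi(z)-\psi(z)|\max\{|\varphi'(z)|, |\psi'(z)|\} = 0$.
   Context: $\mathbb{D}$ is the open unit disk and $H(\mathbb{D})$ the analytic functions on $\mathbb{D}$. For a positive continuous radial function $\nu$ on $\mathbb{D}$ (radial: $\nu(z)=\nu(|z|)$), the Bloch type space $\mathcal{B}_{\nu}$ consists of $f\in H(\mathbb{D})$ with $\sup_{z\in\mathbb{D}}\nu(z)|f'(z)|<\infty$ (normed by $|f(0)|+\sup_{z}\nu(z)|f'(z)|$), and $\mathcal{B}_{\nu,0}$ is the closed subspace of $f\in\mathcal{B}_\nu$ with $\nu(z)|f'(z)|\to 0$ as $|z|\to1^-$. For an analytic self-map $\varphi$ of $\mathbb{D}$, $C_\varphi f = f\circ\varphi$. *)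

theory Defs
  imports "HOL-Analysis.Analysis" "HOL-Computational_Algebra.Polynomial"
begin

text \<open>Unit disk is ball 0 1. Analytic functions on the disk are represented by
total functions complex => complex; elements of the abstract space X are normalised
to vanish outside the disk, so that equality of elements means equality on the disk.\<close>

definition radial_weight :: "(complex \<Rightarrow> real) \<Rightarrow> bool" where
  "radial_weight \<nu> \<longleftrightarrow> continuous_on (ball 0 1) \<nu>
     \<and> (\<forall>z\<in>ball 0 1. \<nu> z > 0)
     \<and> (\<forall>z\<in>ball 0 1. \<nu> z = \<nu> (complex_of_real (cmod z)))"

definition self_map_disk :: "(complex \<Rightarrow> complex) \<Rightarrow> bool" where
  "self_map_disk \<phi> \<longleftrightarrow> \<phi> holomorphic_on ball 0 1 \<and> \<phi> ` ball 0 1 \<subseteq> ball 0 1"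

definition vanishes_at_boundary :: "(complex \<Rightarrow> real) \<Rightarrow> bool" where
  "vanishes_at_boundary g \<longleftrightarrow>
     (\<forall>e>0. \<exists>r<1. \<forall>z. r < cmod z \<and> cmod z < 1 \<longrightarrow> \<bar>g z\<bar> < e)"

definition bloch :: "(complex \<Rightarrow> real) \<Rightarrow> (complex \<Rightarrow> complex) \<Rightarrow> bool" where
  "bloch \<nu> f \<longleftrightarrow> f holomorphic_on ball 0 1
     \<and> (\<exists>C. \<forall>z\<in>ball 0 1. \<nu> z * cmod (deriv f z) \<le> C)"

definition bloch_norm :: "(complex \<Rightarrow> real) \<Rightarrow> (complex \<Rightarrow> complex) \<Rightarrow> real" where
  "bloch_norm \<nu> f = cmod (f 0) + (SUP z\<in>ball 0 1. \<nu> z * cmod (deriv f z))"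

definition little_bloch :: "(complex \<Rightarrow> real) \<Rightarrow> (complex \<Rightarrow> complex) \<Rightarrow> bool" where
  "little_bloch \<nu> f \<longleftrightarrow> bloch \<nu> f \<and> vanishes_at_boundary (\<lambda>z. \<nu> z * cmod (deriv f z))"

definition disk_poly :: "complex poly \<Rightarrow> complex \<Rightarrow> complex" where
  "disk_poly p = (\<lambda>z. if z \<in> ball 0 1 then poly p z else 0)"

definition banach_space_analytic ::
    "(complex \<Rightarrow> complex) set \<Rightarrow> ((complex \<Rightarrow> complex) \<Rightarrow> real) \<Rightarrow> bool" where
  "banach_space_analytic X N \<longleftrightarrow>
     (\<forall>f\<in>X. f holomorphic_on ball 0 1 \<and> (\<forall>z. z \<notin> ball 0 1 \<longrightarrow> f z = 0))
     \<and> (\<lambda>z. 0) \<in> X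
     \<and> (\<forall>f\<in>X. \<forall>g\<in>X. (\<lambda>z. f z + g z) \<in> X)
     \<and> (\<forall>f\<in>X. \<forall>c. (\<lambda>z. c * f z) \<in> X)
     \<and> (\<forall>f\<in>X. N f \<ge> 0 \<and> (N f = 0 \<longleftrightarrow> f = (\<lambda>z. 0)))
     \<and> (\<forall>f\<in>X. \<forall>g\<in>X. N (\<lambda>z. f z + g z) \<le> N f + N g)
     \<and> (\<forall>f\<in>X. \<forall>c. N (\<lambda>z. c * f z) = cmod c * N f)
     \<and> (\<forall>s. (\<forall>n. s n \<in> X) \<longrightarrow>
          (\<forall>e>0. \<exists>M. \<forall>m\<ge>M. \<forall>n\<ge>M. N (\<lambda>z. s m z - s n z) < e) \<longrightarrow>
          (\<exists>f\<in>X. (\<lambda>n. N (\<lambda>z. s n z - f z)) \<longlonglongrightarrow> 0))"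

definition polynomials_dense ::
    "(complex \<Rightarrow> complex) set \<Rightarrow> ((complex \<Rightarrow> complex) \<Rightarrow> real) \<Rightarrow> bool" where
  "polynomials_dense X N \<longleftrightarrow>
     (\<forall>p. disk_poly p \<in> X)
     \<and> (\<forall>f\<in>X. \<forall>e>0. \<exists>p. N (\<lambda>z. f z - disk_poly p z) < e)"

end

theory Submission
  imports Defs
begin

text \<open>For a polynomial \<open>p\<close>,
  \<open>(p\<circ>\<phi> - p\<circ>\<psi>)' = p'(\<phi>)(\<phi>' - \<psi>') + (p'(\<phi>) - p'(\<psi>))\<psi>'\<close>, and \<open>p'\<close> is bounded and Lipschitz
  on the disk, so \<open>\<nu>|(p\<circ>\<phi> - p\<circ>\<psi>)'| \<le> K \<nu>|\<phi>' - \<psi>'| + L \<nu>|\<phi> - \<psi>| max(|\<phi>'|, |\<psi>'|)\<close>.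
  Hence (c) sends every polynomial into \<open>\<B>\<^sub>\<nu>\<^sub>,\<^sub>0\<close>, and since the polynomials are dense,
  the operator is bounded and \<open>\<B>\<^sub>\<nu>\<^sub>,\<^sub>0\<close> is closed in \<open>\<B>\<^sub>\<nu>\<close>, (a) follows; testing (a) on
  \<open>z\<close> and \<open>z\<^sup>2\<close> gives (b). Finally, \<open>\<phi>\<phi>' - \<psi>\<psi>' = \<phi>(\<phi>' - \<psi>') + (\<phi> - \<psi>)\<psi>' = \<psi>(\<phi>' - \<psi>') + (\<phi> - \<psi>)\<phi>'\<close>
  with \<open>|\<phi>|, |\<psi>| \<le> 1\<close> shows that, once \<open>\<nu>|\<phi>' - \<psi>'| \<rightarrow> 0\<close>, the vanishing of
  \<open>\<nu>|(\<phi>\<^sup>2 - \<psi>\<^sup>2)'|\<close> at the boundary is equivalent to that of \<open>\<nu>|\<phi> - \<psi>| max(|\<phi>'|, |\<psi>'|)\<close>.\<close>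

definition disk_boundary :: "complex filter" where
  "disk_boundary = filtercomap cmod (at_left 1)"

lemma eventually_disk_boundary:
  "eventually P disk_boundary \<longleftrightarrow> (\<exists>r<1. \<forall>z. r < cmod z \<and> cmod z < 1 \<longrightarrow> P z)"
  unfolding disk_boundary_def eventually_filtercomap eventually_at_left_field
proof
  assume "\<exists>r<1. \<forall>z. r < cmod z \<and> cmod z < 1 \<longrightarrow> P z"
  then obtain r where "r < 1" "\<forall>z. r < cmod z \<and> cmod z < 1 \<longrightarrow> P z" by blast
  then show "\<exists>Q. (\<exists>b<1. \<forall>y>b. y < 1 \<longrightarrow> Q y) \<and> (\<forall>z. Q (cmod z) \<longrightarrow> P z)"
    by (intro exI[of _ "\<lambda>y. r < y \<and> y < 1"]) auto
qed blast

lemma eventually_in_disk_boundary: "eventually (\<lambda>z. z \<in> ball 0 1) disk_boundary"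
  unfolding eventually_disk_boundary by (intro exI[of _ 0]) auto

lemma disk_boundary_null_comparison:
  fixes f g :: "complex \<Rightarrow> real"
  assumes "\<And>z. z \<in> ball 0 1 \<Longrightarrow> 0 \<le> f z" "\<And>z. z \<in> ball 0 1 \<Longrightarrow> f z \<le> g z"
    and "(g \<longlongrightarrow> 0) disk_boundary"
  shows "(f \<longlongrightarrow> 0) disk_boundary"
proof (rule Lim_null_comparison[OF _ assms(3)])
  show "\<forall>\<^sub>F z in disk_boundary. norm (f z) \<le> g z"
    using eventually_in_disk_boundary by (rule eventually_mono) (simp add: assms(1,2))
qed

lemma vanishes_at_boundary_iff_tendsto:
  "vanishes_at_boundary g \<longleftrightarrow> (g \<longlongrightarrow> 0) disk_boundary"
  unfolding vanishes_at_boundary_def tendsto_iff eventually_disk_boundary by simp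

definition weighted_deriv :: "(complex \<Rightarrow> real) \<Rightarrow> (complex \<Rightarrow> complex) \<Rightarrow> complex \<Rightarrow> real" where
  "weighted_deriv \<nu> f z = \<nu> z * cmod (deriv f z)"

lemma little_bloch_iff_tendsto:
  "little_bloch \<nu> f \<longleftrightarrow> bloch \<nu> f \<and> (weighted_deriv \<nu> f \<longlongrightarrow> 0) disk_boundary"
  unfolding little_bloch_def vanishes_at_boundary_iff_tendsto weighted_deriv_def[abs_def] ..

lemma weighted_deriv_le_bloch_norm:
  assumes "bloch \<nu> f" "z \<in> ball 0 1"
  shows "weighted_deriv \<nu> f z \<le> bloch_norm \<nu> f"
proof -
  obtain C where "\<forall>w\<in>ball 0 1. weighted_deriv \<nu> f w \<le> C"
    using assms(1) unfolding bloch_def weighted_deriv_def by blast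
  then have "weighted_deriv \<nu> f z \<le> (SUP w\<in>ball 0 1. weighted_deriv \<nu> f w)"
    using assms(2) by (intro cSUP_upper bdd_aboveI2) auto
  then show ?thesis
    using norm_ge_zero[of "f 0"] unfolding bloch_norm_def weighted_deriv_def by linarith
qed

lemma deriv_eq_on_disk:
  assumes "\<And>w. w \<in> ball 0 1 \<Longrightarrow> f w = g w" "z \<in> ball 0 1"
  shows "deriv f z = deriv g z"
proof (rule deriv_cong_ev[OF _ refl])
  show "\<forall>\<^sub>F w in nhds z. f w = g w"
    using eventually_nhds_in_open[OF open_ball assms(2)] by (rule eventually_mono) (rule assms(1))
qed

lemma bloch_cong:
  assumes "\<And>w. w \<in> ball 0 1 \<Longrightarrow> f w = g w"
  shows "bloch \<nu> f \<longleftrightarrow> bloch \<nu> g"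
proof -
  have "deriv f z = deriv g z" if "z \<in> ball 0 1" for z
    using assms that by (rule deriv_eq_on_disk)
  moreover have "f holomorphic_on ball 0 1 \<longleftrightarrow> g holomorphic_on ball 0 1"
    using assms by (rule holomorphic_cong[OF refl])
  ultimately show ?thesis
    unfolding bloch_def by auto
qed

lemma little_bloch_cong:
  assumes "\<And>w. w \<in> ball 0 1 \<Longrightarrow> f w = g w"
  shows "little_bloch \<nu> f \<longleftrightarrow> little_bloch \<nu> g"
proof -
  have deriv_eq: "deriv f z = deriv g z" if "z \<in> ball 0 1" for z
    using assms that by (rule deriv_eq_on_disk)
  have "\<forall>\<^sub>F z in disk_boundary. weighted_deriv \<nu> f z = weighted_deriv \<nu> g z"
    using eventually_in_disk_boundary by (rule eventually_mono) (simp add: weighted_deriv_def deriv_eq)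
  then have "(weighted_deriv \<nu> f \<longlongrightarrow> 0) disk_boundary \<longleftrightarrow> (weighted_deriv \<nu> g \<longlongrightarrow> 0) disk_boundary"
    by (rule tendsto_cong)
  moreover have "bloch \<nu> f \<longleftrightarrow> bloch \<nu> g"
    using assms by (rule bloch_cong)
  ultimately show ?thesis
    unfolding little_bloch_iff_tendsto by blast
qed

lemma little_bloch_closed:
  assumes nonneg: "\<And>z. z \<in> ball 0 1 \<Longrightarrow> \<nu> z \<ge> 0" and "bloch \<nu> f"
    and approx: "\<And>e. e > 0 \<Longrightarrow> \<exists>g. little_bloch \<nu> g \<and> bloch \<nu> (\<lambda>z. f z - g z)
                                      \<and> bloch_norm \<nu> (\<lambda>z. f z - g z) < e"
  shows "little_bloch \<nu> f"
  unfolding little_bloch_iff_tendsto tendsto_iff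
proof (intro conjI allI impI)
  fix e :: real
  assume "e > 0"
  then obtain g where g: "little_bloch \<nu> g" and fg: "bloch \<nu> (\<lambda>z. f z - g z)"
    and small: "bloch_norm \<nu> (\<lambda>z. f z - g z) < e / 2"
    using approx[of "e / 2"] by auto
  have "\<forall>\<^sub>F z in disk_boundary. dist (weighted_deriv \<nu> g z) 0 < e / 2"
    using g \<open>e > 0\<close> unfolding little_bloch_iff_tendsto by (intro tendstoD) auto
  then have "\<forall>\<^sub>F z in disk_boundary. weighted_deriv \<nu> g z < e / 2"
    by (rule eventually_mono) simp
  with eventually_in_disk_boundary
  show "\<forall>\<^sub>F z in disk_boundary. dist (weighted_deriv \<nu> f z) 0 < e"
  proof eventually_elim
    case (elim z)
    have "(\<lambda>w. f w - g w) holomorphic_on ball 0 1" "g holomorphic_on ball 0 1"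
      using fg g unfolding little_bloch_def bloch_def by simp_all
    then have "(\<lambda>w. f w - g w) field_differentiable at z" "g field_differentiable at z"
      using elim(1) by (simp_all add: holomorphic_on_imp_differentiable_at)
    then have "deriv (\<lambda>w. (f w - g w) + g w) z = deriv (\<lambda>w. f w - g w) z + deriv g z"
      by (rule deriv_add)
    then have "cmod (deriv f z) \<le> cmod (deriv (\<lambda>w. f w - g w) z) + cmod (deriv g z)"
      by (simp add: norm_triangle_ineq)
    from mult_left_mono[OF this nonneg[OF elim(1)]]
    have "weighted_deriv \<nu> f z \<le> weighted_deriv \<nu> (\<lambda>w. f w - g w) z + weighted_deriv \<nu> g z"
      by (simp add: weighted_deriv_def distrib_left)
    also have "\<dots> < e"
      using weighted_deriv_le_bloch_norm[OF fg elim(1)] small elim(2) by linarith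
    finally show ?case
      using nonneg[OF elim(1)] by (simp add: weighted_deriv_def)
  qed
qed (fact \<open>bloch \<nu> f\<close>)

lemma norm_mult_diff_le:
  fixes a b a' b' :: "'a::real_normed_div_algebra"
  shows "norm (a * a' - b * b') \<le> norm a * norm (a' - b') + norm (a - b) * norm b'"
proof -
  have "a * a' - b * b' = a * (a' - b') + (a - b) * b'"
    by (simp add: algebra_simps)
  then show ?thesis
    by (metis norm_mult norm_triangle_ineq)
qed

lemma norm_diff_mult_le:
  fixes a b a' b' :: "'a::real_normed_div_algebra"
  shows "norm (a - b) * norm b' \<le> norm (a * a' - b * b') + norm a * norm (a' - b')"
proof -
  have "(a - b) * b' = (a * a' - b * b') - a * (a' - b')"
    by (simp add: algebra_simps)
  then show ?thesis
    by (metis norm_mult norm_triangle_ineq4)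
qed

lemma norm_mult_diff_max_le:
  fixes a b a' b' :: "'a::real_normed_div_algebra"
  assumes "norm a \<le> 1"
  shows "norm (a * a' - b * b') \<le> norm (a' - b') + norm (a - b) * max (norm a') (norm b')"
proof -
  have "norm a * norm (a' - b') \<le> norm (a' - b')"
    using assms by (simp add: mult_left_le_one_le)
  moreover have "norm (a - b) * norm b' \<le> norm (a - b) * max (norm a') (norm b')"
    by (simp add: mult_left_mono)
  ultimately show ?thesis
    using norm_mult_diff_le[of a a' b b'] by linarith
qed

lemma norm_diff_mult_max_le:
  fixes a b a' b' :: "'a::real_normed_div_algebra"
  assumes "norm a \<le> 1" "norm b \<le> 1"
  shows "norm (a - b) * max (norm a') (norm b') \<le> norm (a * a' - b * b') + norm (a' - b')"
proof -
  have "norm a * norm (a' - b') \<le> norm (a' - b')" "norm b * norm (a' - b') \<le> norm (a' - b')"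
    using assms by (simp_all add: mult_left_le_one_le)
  moreover have "norm (a - b) * norm a' \<le> norm (a * a' - b * b') + norm b * norm (a' - b')"
  proof -
    have "norm (b - a) = norm (a - b)" "norm (b * b' - a * a') = norm (a * a' - b * b')"
      "norm (b' - a') = norm (a' - b')"
      by (simp_all add: norm_minus_commute)
    then show ?thesis
      using norm_diff_mult_le[where a = b and b = a and a' = b' and b' = a'] by simp
  qed
  moreover note norm_diff_mult_le[where a = a and b = b and a' = a' and b' = b']
  ultimately show ?thesis
    unfolding max_def by auto
qed

lemma bounded_poly_on_compact:
  fixes p :: "'a::real_normed_field poly"
  assumes "compact S"
  shows "\<exists>K. \<forall>x\<in>S. norm (poly p x) \<le> K"
proof -
  have "compact (poly p ` S)"
    using assms by (intro compact_continuous_image continuous_intros)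
  then show ?thesis
    by (meson bounded_iff compact_imp_bounded image_eqI)
qed

lemma lipschitz_poly_on_convex_compact:
  fixes p :: "'a::real_normed_field poly"
  assumes "convex S" "compact S"
  shows "\<exists>L. \<forall>x\<in>S. \<forall>y\<in>S. norm (poly p x - poly p y) \<le> L * norm (x - y)"
proof -
  obtain L where "\<forall>x\<in>S. norm (poly (pderiv p) x) \<le> L"
    using bounded_poly_on_compact[OF assms(2)] by blast
  then show ?thesis
    using assms(1) by (blast intro: field_differentiable_bound has_field_derivative_at_within poly_DERIV)
qed

lemma poly_mult_diff_bound:
  fixes p :: "'a::real_normed_field poly"
  assumes "convex S" "compact S"
  shows "\<exists>K L. \<forall>a\<in>S. \<forall>b\<in>S. \<forall>a' b'. norm (poly p a * a' - poly p b * b')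
           \<le> K * norm (a' - b') + L * norm (a - b) * max (norm a') (norm b')"
proof -
  obtain K where K: "\<forall>x\<in>S. norm (poly p x) \<le> K"
    using bounded_poly_on_compact[OF assms(2)] by blast
  obtain L where L: "\<forall>x\<in>S. \<forall>y\<in>S. norm (poly p x - poly p y) \<le> L * norm (x - y)"
    using lipschitz_poly_on_convex_compact[OF assms] by blast
  have "norm (poly p a * a' - poly p b * b')
      \<le> K * norm (a' - b') + L * norm (a - b) * max (norm a') (norm b')"
    if "a \<in> S" "b \<in> S" for a b a' b'
  proof -
    have "norm (poly p a) * norm (a' - b') \<le> K * norm (a' - b')"
      using K that by (intro mult_right_mono) auto
    moreover have lip: "norm (poly p a - poly p b) \<le> L * norm (a - b)"
      using L that by blast
    then have "norm (poly p a - poly p b) * norm b' \<le> L * norm (a - b) * max (norm a') (norm b')"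
      using order_trans[OF norm_ge_zero lip] by (intro mult_mono) auto
    ultimately show ?thesis
      using norm_mult_diff_le[of "poly p a" a' "poly p b" b'] by linarith
  qed
  then show ?thesis by blast
qed

lemma banach_space_analytic_diff:
  assumes "banach_space_analytic X N" "f \<in> X" "g \<in> X"
  shows "(\<lambda>z. f z - g z) \<in> X"
proof -
  have add: "\<And>f g. f \<in> X \<Longrightarrow> g \<in> X \<Longrightarrow> (\<lambda>z. f z + g z) \<in> X"
    and scale: "\<And>f c. f \<in> X \<Longrightarrow> (\<lambda>z. c * f z) \<in> X"
    using assms(1) by (simp_all add: banach_space_analytic_def)
  have "(\<lambda>z. f z + (- 1) * g z) \<in> X"
    by (rule add[OF assms(2) scale[OF assms(3)]])
  then show ?thesis by simp
qed

lemma disk_poly_eq_poly: "z \<in> ball 0 1 \<Longrightarrow> disk_poly p z = poly p z"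
  by (simp add: disk_poly_def)

lemma holomorphic_disk_poly: "disk_poly p holomorphic_on ball 0 1"
  by (rule holomorphic_transform[of "poly p"]) (auto intro: holomorphic_intros simp: disk_poly_eq_poly)

lemma deriv_disk_poly: "z \<in> ball 0 1 \<Longrightarrow> deriv (disk_poly p) z = poly (pderiv p) z"
  using deriv_eq_on_disk[of "disk_poly p" "poly p"] by (simp add: disk_poly_eq_poly DERIV_imp_deriv)

locale self_map_pair =
  fixes \<nu> :: "complex \<Rightarrow> real" and \<phi> \<psi> :: "complex \<Rightarrow> complex"
  assumes weight_nonneg: "z \<in> ball 0 1 \<Longrightarrow> \<nu> z \<ge> 0"
    and self_map_\<phi>: "self_map_disk \<phi>" and self_map_\<psi>: "self_map_disk \<psi>"
begin

abbreviation comp_diff :: "(complex \<Rightarrow> complex) \<Rightarrow> complex \<Rightarrow> complex" where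
  "comp_diff f \<equiv> \<lambda>z. f (\<phi> z) - f (\<psi> z)"

definition weighted_gap :: "complex \<Rightarrow> real" where
  "weighted_gap = (\<lambda>z. \<nu> z * cmod (\<phi> z - \<psi> z) * max (cmod (deriv \<phi> z)) (cmod (deriv \<psi> z)))"

lemma maps_into_disk:
  assumes "z \<in> ball 0 1"
  shows "\<phi> z \<in> ball 0 1" "\<psi> z \<in> ball 0 1"
  using assms self_map_\<phi> self_map_\<psi> unfolding self_map_disk_def by blast+

lemma weighted_deriv_nonneg: "z \<in> ball 0 1 \<Longrightarrow> weighted_deriv \<nu> f z \<ge> 0"
  by (simp add: weighted_deriv_def weight_nonneg)

lemma weighted_gap_nonneg: "z \<in> ball 0 1 \<Longrightarrow> weighted_gap z \<ge> 0"
  unfolding weighted_gap_def by (intro mult_nonneg_nonneg weight_nonneg) (auto simp: le_max_iff_disj)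

lemma deriv_comp_diff:
  assumes "f holomorphic_on ball 0 1" "z \<in> ball 0 1"
  shows "deriv (comp_diff f) z = deriv f (\<phi> z) * deriv \<phi> z - deriv f (\<psi> z) * deriv \<psi> z"
proof -
  have "(f has_field_derivative deriv f (\<phi> z)) (at (\<phi> z))"
    "(f has_field_derivative deriv f (\<psi> z)) (at (\<psi> z))"
    using assms maps_into_disk by (auto intro: holomorphic_derivI)
  moreover have "(\<phi> has_field_derivative deriv \<phi> z) (at z)" "(\<psi> has_field_derivative deriv \<psi> z) (at z)"
    using assms(2) self_map_\<phi> self_map_\<psi> unfolding self_map_disk_def by (auto intro: holomorphic_derivI)
  ultimately have "(comp_diff f has_field_derivative
      deriv f (\<phi> z) * deriv \<phi> z - deriv f (\<psi> z) * deriv \<psi> z) (at z)"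
    by (intro DERIV_diff DERIV_chain2)
  then show ?thesis
    by (rule DERIV_imp_deriv)
qed

lemma comp_diff_monomials:
  assumes "z \<in> ball 0 1"
  shows "comp_diff (disk_poly [:0, 1:]) z = \<phi> z - \<psi> z"
    and "comp_diff (disk_poly [:0, 0, 1:]) z = (\<phi> z)\<^sup>2 - (\<psi> z)\<^sup>2"
  using maps_into_disk[OF assms] by (simp_all add: disk_poly_eq_poly power2_eq_square)

lemma bloch_square_diff_iff_monomial:
  "bloch \<nu> (\<lambda>z. (\<phi> z)\<^sup>2 - (\<psi> z)\<^sup>2) \<longleftrightarrow> bloch \<nu> (comp_diff (disk_poly [:0, 0, 1:]))"
  by (rule bloch_cong) (simp add: comp_diff_monomials)

lemma little_bloch_diff_iff_monomial:
  "little_bloch \<nu> (\<lambda>z. \<phi> z - \<psi> z) \<longleftrightarrow> little_bloch \<nu> (comp_diff (disk_poly [:0, 1:]))"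
  by (rule little_bloch_cong) (simp add: comp_diff_monomials)

lemma little_bloch_square_diff_iff_monomial:
  "little_bloch \<nu> (\<lambda>z. (\<phi> z)\<^sup>2 - (\<psi> z)\<^sup>2) \<longleftrightarrow> little_bloch \<nu> (comp_diff (disk_poly [:0, 0, 1:]))"
  by (rule little_bloch_cong) (simp add: comp_diff_monomials)

lemma weighted_deriv_diff:
  assumes "z \<in> ball 0 1"
  shows "weighted_deriv \<nu> (\<lambda>z. \<phi> z - \<psi> z) z = \<nu> z * cmod (deriv \<phi> z - deriv \<psi> z)"
  using deriv_comp_diff[of "\<lambda>w. w", OF _ assms] by (simp add: weighted_deriv_def)

lemma weighted_deriv_square_diff:
  assumes "z \<in> ball 0 1"
  shows "weighted_deriv \<nu> (\<lambda>z. (\<phi> z)\<^sup>2 - (\<psi> z)\<^sup>2) z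
    = 2 * (\<nu> z * cmod (\<phi> z * deriv \<phi> z - \<psi> z * deriv \<psi> z))"
proof -
  have "deriv (\<lambda>w. w\<^sup>2) w = 2 * w" for w :: complex
    by (rule DERIV_imp_deriv) (auto intro!: derivative_eq_intros)
  then have "deriv (\<lambda>z. (\<phi> z)\<^sup>2 - (\<psi> z)\<^sup>2) z = 2 * (\<phi> z * deriv \<phi> z - \<psi> z * deriv \<psi> z)"
    using deriv_comp_diff[of "\<lambda>w. w\<^sup>2", OF _ assms] by (simp add: holomorphic_intros algebra_simps)
  then have "cmod (deriv (\<lambda>z. (\<phi> z)\<^sup>2 - (\<psi> z)\<^sup>2) z)
      = 2 * cmod (\<phi> z * deriv \<phi> z - \<psi> z * deriv \<psi> z)"
    by (simp only: norm_mult norm_numeral)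
  then show ?thesis
    by (simp add: weighted_deriv_def mult.left_commute)
qed

lemma weighted_gap_le:
  assumes "z \<in> ball 0 1"
  shows "weighted_gap z \<le> weighted_deriv \<nu> (\<lambda>z. \<phi> z - \<psi> z) z
    + weighted_deriv \<nu> (\<lambda>z. (\<phi> z)\<^sup>2 - (\<psi> z)\<^sup>2) z"
proof -
  define a b a' b' where "a = \<phi> z" "b = \<psi> z" "a' = deriv \<phi> z" "b' = deriv \<psi> z"
  have "norm a \<le> 1" "norm b \<le> 1"
    using maps_into_disk[OF assms] by (auto simp: a_b_a'_b'_def)
  then have "norm (a - b) * max (norm a') (norm b') \<le> norm (a' - b') + 2 * norm (a * a' - b * b')"
    using norm_diff_mult_max_le[of a b a' b'] norm_ge_zero[of "a * a' - b * b'"] by linarith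
  from mult_left_mono[OF this weight_nonneg[OF assms]]
  show ?thesis
    using assms by (simp add: weighted_deriv_diff weighted_deriv_square_diff weighted_gap_def
        a_b_a'_b'_def distrib_left mult_ac)
qed

lemma weighted_deriv_square_diff_le:
  assumes "z \<in> ball 0 1"
  shows "weighted_deriv \<nu> (\<lambda>z. (\<phi> z)\<^sup>2 - (\<psi> z)\<^sup>2) z
    \<le> 2 * (weighted_deriv \<nu> (\<lambda>z. \<phi> z - \<psi> z) z + weighted_gap z)"
proof -
  define a b a' b' where "a = \<phi> z" "b = \<psi> z" "a' = deriv \<phi> z" "b' = deriv \<psi> z"
  have "norm a \<le> 1"
    using maps_into_disk[OF assms] by (auto simp: a_b_a'_b'_def)
  from mult_left_mono[OF norm_mult_diff_max_le[OF this, of a' b b'] weight_nonneg[OF assms]]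
  show ?thesis
    using assms by (simp add: weighted_deriv_diff weighted_deriv_square_diff weighted_gap_def
        a_b_a'_b'_def distrib_left mult_ac)
qed

lemma weighted_deriv_comp_diff_poly_le:
  "\<exists>K L. \<forall>z\<in>ball 0 1. weighted_deriv \<nu> (comp_diff (disk_poly p)) z
     \<le> K * weighted_deriv \<nu> (\<lambda>z. \<phi> z - \<psi> z) z + L * weighted_gap z"
proof -
  obtain K L where KL: "\<forall>a\<in>cball 0 1. \<forall>b\<in>cball 0 1. \<forall>a' b'.
      norm (poly (pderiv p) a * a' - poly (pderiv p) b * b')
        \<le> K * norm (a' - b') + L * norm (a - b) * max (norm a') (norm b')"
    using poly_mult_diff_bound[OF convex_cball compact_cball] by blast
  have "weighted_deriv \<nu> (comp_diff (disk_poly p)) z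
      \<le> K * weighted_deriv \<nu> (\<lambda>z. \<phi> z - \<psi> z) z + L * weighted_gap z" if z: "z \<in> ball 0 1" for z
  proof -
    have "deriv (comp_diff (disk_poly p)) z
        = poly (pderiv p) (\<phi> z) * deriv \<phi> z - poly (pderiv p) (\<psi> z) * deriv \<psi> z"
      using deriv_comp_diff[OF holomorphic_disk_poly z] maps_into_disk[OF z] by (simp add: deriv_disk_poly)
    moreover have "\<phi> z \<in> cball 0 1" "\<psi> z \<in> cball 0 1"
      using maps_into_disk[OF z] by auto
    ultimately have "norm (deriv (comp_diff (disk_poly p)) z) \<le> K * norm (deriv \<phi> z - deriv \<psi> z)
        + L * norm (\<phi> z - \<psi> z) * max (norm (deriv \<phi> z)) (norm (deriv \<psi> z))"
      using KL by simp
    from mult_left_mono[OF this weight_nonneg[OF z]]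
    show ?thesis
      unfolding weighted_deriv_diff[OF z]
      by (simp add: weighted_deriv_def weighted_gap_def distrib_left mult_ac)
  qed
  then show ?thesis by blast
qed

lemma little_bloch_square_diff_iff_vanishing_gap:
  assumes "little_bloch \<nu> (\<lambda>z. \<phi> z - \<psi> z)" and "bloch \<nu> (\<lambda>z. (\<phi> z)\<^sup>2 - (\<psi> z)\<^sup>2)"
  shows "little_bloch \<nu> (\<lambda>z. (\<phi> z)\<^sup>2 - (\<psi> z)\<^sup>2) \<longleftrightarrow> vanishes_at_boundary weighted_gap"
proof -
  let ?D = "weighted_deriv \<nu> (\<lambda>z. \<phi> z - \<psi> z)"
  let ?S = "weighted_deriv \<nu> (\<lambda>z. (\<phi> z)\<^sup>2 - (\<psi> z)\<^sup>2)"
  have D: "(?D \<longlongrightarrow> 0) disk_boundary"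
    using assms(1) by (simp add: little_bloch_iff_tendsto)
  have "(?S \<longlongrightarrow> 0) disk_boundary \<longleftrightarrow> (weighted_gap \<longlongrightarrow> 0) disk_boundary"
  proof
    assume "(?S \<longlongrightarrow> 0) disk_boundary"
    then have "((\<lambda>z. ?D z + ?S z) \<longlongrightarrow> 0) disk_boundary"
      using D by (rule tendsto_add_zero[rotated])
    with weighted_gap_nonneg weighted_gap_le
    show "(weighted_gap \<longlongrightarrow> 0) disk_boundary"
      by (rule disk_boundary_null_comparison)
  next
    assume "(weighted_gap \<longlongrightarrow> 0) disk_boundary"
    then have "((\<lambda>z. 2 * (?D z + weighted_gap z)) \<longlongrightarrow> 0) disk_boundary"
      using D by (intro tendsto_mult_right_zero tendsto_add_zero)
    with weighted_deriv_nonneg weighted_deriv_square_diff_le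
    show "(?S \<longlongrightarrow> 0) disk_boundary"
      by (rule disk_boundary_null_comparison)
  qed
  then show ?thesis
    using assms(2) by (simp add: little_bloch_iff_tendsto vanishes_at_boundary_iff_tendsto)
qed

lemma little_bloch_comp_diff_poly:
  assumes "little_bloch \<nu> (\<lambda>z. \<phi> z - \<psi> z)" and "vanishes_at_boundary weighted_gap"
    and "bloch \<nu> (comp_diff (disk_poly p))"
  shows "little_bloch \<nu> (comp_diff (disk_poly p))"
proof -
  obtain K L where KL: "\<forall>z\<in>ball 0 1. weighted_deriv \<nu> (comp_diff (disk_poly p)) z
      \<le> K * weighted_deriv \<nu> (\<lambda>z. \<phi> z - \<psi> z) z + L * weighted_gap z"
    using weighted_deriv_comp_diff_poly_le by blast
  have lim: "((\<lambda>z. K * weighted_deriv \<nu> (\<lambda>z. \<phi> z - \<psi> z) z + L * weighted_gap z) \<longlongrightarrow> 0) disk_boundary"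
    using assms(1,2) unfolding little_bloch_iff_tendsto vanishes_at_boundary_iff_tendsto
    by (intro tendsto_add_zero tendsto_mult_right_zero) auto
  have "(weighted_deriv \<nu> (comp_diff (disk_poly p)) \<longlongrightarrow> 0) disk_boundary"
    using weighted_deriv_nonneg KL[rule_format] lim by (rule disk_boundary_null_comparison)
  then show ?thesis
    using assms(3) by (simp add: little_bloch_iff_tendsto)
qed

lemma little_bloch_comp_diff_of_dense:
  assumes "banach_space_analytic X N" and dense: "polynomials_dense X N"
    and bloch_X: "\<forall>f\<in>X. bloch \<nu> (comp_diff f)"
    and bounded: "\<forall>f\<in>X. bloch_norm \<nu> (comp_diff f) \<le> M * N f"
    and little_bloch_poly: "\<And>p. little_bloch \<nu> (comp_diff (disk_poly p))"
    and "f \<in> X"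
  shows "little_bloch \<nu> (comp_diff f)"
proof (rule little_bloch_closed[OF weight_nonneg])
  show "bloch \<nu> (comp_diff f)"
    using bloch_X \<open>f \<in> X\<close> by blast
  fix e :: real
  assume "e > 0"
  have "0 < \<bar>M\<bar> + 1" by simp
  with \<open>e > 0\<close> have "e / (\<bar>M\<bar> + 1) > 0" by (rule divide_pos_pos)
  then obtain p where p: "N (\<lambda>z. f z - disk_poly p z) < e / (\<bar>M\<bar> + 1)"
    using dense \<open>f \<in> X\<close> unfolding polynomials_dense_def by blast
  let ?g = "\<lambda>z. f z - disk_poly p z"
  have "disk_poly p \<in> X"
    using dense unfolding polynomials_dense_def by blast
  with assms(1) \<open>f \<in> X\<close> have "?g \<in> X"
    by (rule banach_space_analytic_diff)
  have "N ?g \<ge> 0"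
    using assms(1) \<open>?g \<in> X\<close> unfolding banach_space_analytic_def by blast
  have "bloch_norm \<nu> (comp_diff ?g) \<le> M * N ?g"
    using \<open>?g \<in> X\<close> by (rule bounded[rule_format])
  also have "\<dots> \<le> (\<bar>M\<bar> + 1) * N ?g"
    using \<open>N ?g \<ge> 0\<close> by (intro mult_right_mono) auto
  also have "\<dots> < e"
    using p by (simp add: field_simps)
  finally have "bloch_norm \<nu> (comp_diff ?g) < e" .
  moreover have "(\<lambda>z. comp_diff f z - comp_diff (disk_poly p) z) = comp_diff ?g"
    by (simp add: fun_eq_iff algebra_simps)
  moreover have "bloch \<nu> (comp_diff ?g)"
    using \<open>?g \<in> X\<close> by (rule bloch_X[rule_format])
  ultimately show "\<exists>g. little_bloch \<nu> g \<and> bloch \<nu> (\<lambda>z. comp_diff f z - g z)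
      \<and> bloch_norm \<nu> (\<lambda>z. comp_diff f z - g z) < e"
    using little_bloch_poly by (intro exI[of _ "comp_diff (disk_poly p)"]) simp
qed

lemma little_bloch_comp_diff_iff:
  assumes "banach_space_analytic X N" and dense: "polynomials_dense X N"
    and bloch_X: "\<forall>f\<in>X. bloch \<nu> (comp_diff f)"
    and bounded: "\<forall>f\<in>X. bloch_norm \<nu> (comp_diff f) \<le> M * N f"
  shows "(\<forall>f\<in>X. little_bloch \<nu> (comp_diff f))
    \<longleftrightarrow> little_bloch \<nu> (\<lambda>z. \<phi> z - \<psi> z) \<and> little_bloch \<nu> (\<lambda>z. (\<phi> z)\<^sup>2 - (\<psi> z)\<^sup>2)"
proof -
  have poly_in_X: "disk_poly p \<in> X" for p
    using dense unfolding polynomials_dense_def by blast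
  then have bloch_poly: "bloch \<nu> (comp_diff (disk_poly p))" for p
    by (rule bloch_X[rule_format])
  show ?thesis
  proof
    assume all: "\<forall>f\<in>X. little_bloch \<nu> (comp_diff f)"
    have "little_bloch \<nu> (comp_diff (disk_poly p))" for p
      using poly_in_X by (rule all[rule_format])
    then show "little_bloch \<nu> (\<lambda>z. \<phi> z - \<psi> z) \<and> little_bloch \<nu> (\<lambda>z. (\<phi> z)\<^sup>2 - (\<psi> z)\<^sup>2)"
      by (simp add: little_bloch_diff_iff_monomial little_bloch_square_diff_iff_monomial)
  next
    assume "little_bloch \<nu> (\<lambda>z. \<phi> z - \<psi> z) \<and> little_bloch \<nu> (\<lambda>z. (\<phi> z)\<^sup>2 - (\<psi> z)\<^sup>2)"
    moreover have "bloch \<nu> (\<lambda>z. (\<phi> z)\<^sup>2 - (\<psi> z)\<^sup>2)"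
      using bloch_poly by (simp add: bloch_square_diff_iff_monomial)
    ultimately have "little_bloch \<nu> (\<lambda>z. \<phi> z - \<psi> z)" "vanishes_at_boundary weighted_gap"
      using little_bloch_square_diff_iff_vanishing_gap by blast+
    then have "little_bloch \<nu> (comp_diff (disk_poly p))" for p
      using bloch_poly by (rule little_bloch_comp_diff_poly)
    with assms show "\<forall>f\<in>X. little_bloch \<nu> (comp_diff f)"
      by (blast intro: little_bloch_comp_diff_of_dense)
  qed
qed

end

theorem theorem3p1:
  fixes \<nu> :: "complex \<Rightarrow> real"
    and X :: "(complex \<Rightarrow> complex) set" and N :: "(complex \<Rightarrow> complex) \<Rightarrow> real"
    and \<phi> \<psi> :: "complex \<Rightarrow> complex"
  assumes "radial_weight \<nu>"
    and "banach_space_analytic X N"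
    and "polynomials_dense X N"
    and "self_map_disk \<phi>" and "self_map_disk \<psi>"
    and bdd: "(\<forall>f\<in>X. bloch \<nu> (\<lambda>z. f (\<phi> z) - f (\<psi> z)))
              \<and> (\<exists>M. \<forall>f\<in>X. bloch_norm \<nu> (\<lambda>z. f (\<phi> z) - f (\<psi> z)) \<le> M * N f)"
  shows "(((\<forall>f\<in>X. little_bloch \<nu> (\<lambda>z. f (\<phi> z) - f (\<psi> z)))
           \<and> (\<exists>M. \<forall>f\<in>X. bloch_norm \<nu> (\<lambda>z. f (\<phi> z) - f (\<psi> z)) \<le> M * N f))
         \<longleftrightarrow> (little_bloch \<nu> (\<lambda>z. \<phi> z - \<psi> z)
              \<and> little_bloch \<nu> (\<lambda>z. (\<phi> z)\<^sup>2 - (\<psi> z)\<^sup>2)))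
       \<and> ((little_bloch \<nu> (\<lambda>z. \<phi> z - \<psi> z)
              \<and> little_bloch \<nu> (\<lambda>z. (\<phi> z)\<^sup>2 - (\<psi> z)\<^sup>2))
         \<longleftrightarrow> (little_bloch \<nu> (\<lambda>z. \<phi> z - \<psi> z)
              \<and> vanishes_at_boundary
                  (\<lambda>z. \<nu> z * cmod (\<phi> z - \<psi> z) * max (cmod (deriv \<phi> z)) (cmod (deriv \<psi> z)))))"
proof -
  have weight_pos: "\<nu> z > 0" if "z \<in> ball 0 1" for z
    using assms(1) that unfolding radial_weight_def by blast
  interpret self_map_pair \<nu> \<phi> \<psi>
    by unfold_locales (simp_all add: less_imp_le weight_pos assms(4,5))
  have bloch_X: "\<forall>f\<in>X. bloch \<nu> (comp_diff f)"
    using bdd by blast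
  obtain M where bounded: "\<forall>f\<in>X. bloch_norm \<nu> (comp_diff f) \<le> M * N f"
    using bdd by blast
  have "disk_poly [:0, 0, 1:] \<in> X"
    using assms(3) unfolding polynomials_dense_def by blast
  then have "bloch \<nu> (\<lambda>z. (\<phi> z)\<^sup>2 - (\<psi> z)\<^sup>2)"
    by (simp add: bloch_square_diff_iff_monomial bloch_X)
  then show ?thesis
    using little_bloch_comp_diff_iff[OF assms(2,3) bloch_X bounded]
      little_bloch_square_diff_iff_vanishing_gap bdd
    unfolding weighted_gap_def by blast
qed

end
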